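(* Let $\pi(m)=(1/2)^m$ for $m\in\mathbb{N}^+$ (and $0$ otherwise), and let the proposal be $q(m,\{m+1\})=\theta=1-q(m,\{m-1\})$ for $m\in\mathbb{Z}$, $\theta\in(0,1)$. For $m\in\mathbb{N}^+$ and $N\in\mathbb{N}^+$ let the weights be $$W_{m,N}=\frac{b_m-\varepsilon_m}{N}\,\mathrm{Bin}(N,s_m)+\varepsilon_m,$$ where $b_m>1$, $\varepsilon_m\in(0,1]$, $\mathrm{Bin}(N,s)$ is a binomial random variable with parameters $N$ and $s$, and $s_m=\frac{1-\varepsilon_m}{b_m-\varepsilon_m}$ so that $\mathbb{E}[W_{m,N}]=1$. Suppose $b_m\to\infty$, $\varepsilon_m\to0$ as $m\to\infty$ and $\lim_{m\to\infty}\frac{\varepsilon_{m-1}}{\varepsilon_m}=l$ with $l\in\mathbb{R}^+\cup\{+\infty\}$. Then for every $N\in\mathbb{N}^+$ the chain generated by the noisy kernel $\tilde P_N$ is geometrically ergodic.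
   Context: Noisy Metropolis–Hastings kernel $\tilde P_N$: from state $m$, propose $Y\sim q(m,\cdot)$, draw independent weights $W\sim Q_{m,N}$, $U\sim Q_{Y,N}$ (the laws of $W_{m,N}$, $W_{Y,N}$), and move to $Y$ with probability $\min\{1,\frac{\pi(Y)q(Y,m)}{\pi(m)q(m,Y)}\cdot\frac{U}{W}\}$, otherwise stay at $m$ (proposals outside $\mathbb{N}^+$ are rejected). A $\varphi$-irreducible aperiodic chain with kernel $K$ is geometrically ergodic if it has an invariant probability distribution $\mu$ and there exist finite $V\ge1$, $\tau<1$, $R<\infty$ with $\|K^n(x,\cdot)-\mu\|_{TV}\le RV(x)\tau^n$ for all $x,n$. *)

theory Defs
  imports "HOL-Probability.Probability"
begin

definition pi_geom :: "int \<Rightarrow> real" where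
  "pi_geom y = (if y \<ge> 1 then (1/2) ^ nat y else 0)"

definition q_rw :: "real \<Rightarrow> int \<Rightarrow> int \<Rightarrow> real" where
  "q_rw \<theta> x y = (if y = x + 1 then \<theta> else if y = x - 1 then 1 - \<theta> else 0)"

definition weight_pmf :: "(nat \<Rightarrow> real) \<Rightarrow> (nat \<Rightarrow> real) \<Rightarrow> nat \<Rightarrow> nat \<Rightarrow> real pmf" where
  "weight_pmf b \<epsilon> N m =
     map_pmf (\<lambda>k. (b m - \<epsilon> m) / real N * real k + \<epsilon> m)
             (binomial_pmf N ((1 - \<epsilon> m) / (b m - \<epsilon> m)))"

text \<open>Noisy Metropolis--Hastings kernel on the state space N+ (state 0 is outside the
  state space; it is made absorbing only so that the kernel is total).\<close>
definition noisy_mh :: "real \<Rightarrow> (nat \<Rightarrow> real) \<Rightarrow> (nat \<Rightarrow> real) \<Rightarrow> nat \<Rightarrow> nat \<Rightarrow> nat pmf" where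
  "noisy_mh \<theta> b \<epsilon> N m =
    (if m = 0 then return_pmf 0 else
     bind_pmf (bernoulli_pmf \<theta>) (\<lambda>up.
       let y = (if up then int m + 1 else int m - 1) in
       if y \<le> 0 then return_pmf m else
       bind_pmf (weight_pmf b \<epsilon> N m) (\<lambda>w.
       bind_pmf (weight_pmf b \<epsilon> N (nat y)) (\<lambda>u.
       bind_pmf (bernoulli_pmf
                  (min 1 ((pi_geom y * q_rw \<theta> y (int m)) / (pi_geom (int m) * q_rw \<theta> (int m) y)
                          * (u / w)))) (\<lambda>acc.
       return_pmf (if acc then nat y else m))))))"

primrec kpow :: "('a \<Rightarrow> 'a pmf) \<Rightarrow> nat \<Rightarrow> 'a \<Rightarrow> 'a pmf" where
  "kpow K 0 x = return_pmf x"
| "kpow K (Suc n) x = bind_pmf (kpow K n x) K"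

definition tv_dist :: "'a pmf \<Rightarrow> 'a pmf \<Rightarrow> real" where
  "tv_dist p q = (SUP A. \<bar>measure_pmf.prob p A - measure_pmf.prob q A\<bar>)"

definition geometrically_ergodic :: "'a set \<Rightarrow> ('a \<Rightarrow> 'a pmf) \<Rightarrow> bool" where
  "geometrically_ergodic S K \<longleftrightarrow>
     (\<exists>\<mu>. set_pmf \<mu> \<subseteq> S \<and> bind_pmf \<mu> K = \<mu> \<and>
        (\<exists>(V::'a \<Rightarrow> real) (\<tau>::real) (R::real). (\<forall>x\<in>S. V x \<ge> 1) \<and> \<tau> < 1 \<and>
            (\<forall>x\<in>S. \<forall>n. tv_dist (kpow K n x) \<mu> \<le> R * V x * \<tau> ^ n)))"

end

(*
  Since pi(m + 1) / pi(m) = 1/2, the exact Metropolis-Hastings ratio is the constant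
  (1 - theta) / (2 theta) for an upward and 2 theta / (1 - theta) for a downward proposal, so the noisy
  kernel is a birth-death chain on N+ that moves up with probability theta times an expected noisy
  acceptance probability and down with probability 1 - theta times another one. As b_m -> oo the
  weight W_{m,N} equals eps_m with probability tending to 1, so these expectations approach
  min(1, c eps_{m+1} / eps_m) and min(1, c' eps_{m-1} / eps_m); a finite limit l of eps_{m-1} / eps_m
  is at least 1 because eps_m -> 0, and then the limiting up probability is strictly smaller than
  the limiting down probability.

  A birth-death chain with such a drift towards the origin is geometrically ergodic. Its reversible
  invariant law has geometric tails. The tail probabilities of K^n(x, .) minus those of the invariant
  law evolve under the kernel with up and down exchanged, and that kernel has a Lyapunov function f,
  geometric far out, with (K f)(k) <= alpha f(k) for some alpha < 1. So the tail differences are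
  O(alpha^n f), and summing them bounds the total variation distance.
*)

theory Submission
  imports Defs
begin

section \<open>Discrete probability\<close>

lemma measure_bind_pmf:
  "measure_pmf.prob (bind_pmf M N) X = (\<integral>x. measure_pmf.prob (N x) X \<partial>M)"
proof -
  have int: "integrable (measure_pmf M) (\<lambda>x. measure_pmf.prob (N x) X)"
    by (intro measure_pmf.integrable_const_bound[where B=1]) auto
  have "emeasure (measure_pmf (bind_pmf M N)) X = (\<integral>\<^sup>+x. ennreal (measure_pmf.prob (N x) X) \<partial>M)"
    by (subst emeasure_bind_pmf) (simp add: measure_pmf.emeasure_eq_measure)
  also have "\<dots> = ennreal (\<integral>x. measure_pmf.prob (N x) X \<partial>M)"
    by (rule nn_integral_eq_integral[OF int]) auto
  finally show ?thesis
    by (simp add: measure_pmf.emeasure_eq_measure integral_nonneg_AE)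
qed

lemma measure_bind_bernoulli_pmf:
  assumes "0 \<le> a" "a \<le> 1"
  shows "measure_pmf.prob (bind_pmf (bernoulli_pmf a) F) X
         = a * measure_pmf.prob (F True) X + (1 - a) * measure_pmf.prob (F False) X"
  using assms by (simp add: measure_bind_pmf)

lemma integrable_measure_pmf_bounded:
  fixes g :: "'a \<Rightarrow> real"
  assumes "\<And>x. x \<in> set_pmf M \<Longrightarrow> \<bar>g x\<bar> \<le> B"
  shows "integrable (measure_pmf M) g"
  by (rule measure_pmf.integrable_const_bound[where B=B]) (use assms in \<open>auto simp: AE_measure_pmf_iff\<close>)

lemma integral_measure_pmf_unit_interval:
  fixes g :: "'a \<Rightarrow> real"
  assumes "\<And>x. x \<in> set_pmf M \<Longrightarrow> 0 \<le> g x \<and> g x \<le> 1"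
  shows "0 \<le> (\<integral>x. g x \<partial>M) \<and> (\<integral>x. g x \<partial>M) \<le> 1"
proof -
  have "integrable (measure_pmf M) g"
    by (rule integrable_measure_pmf_bounded[where B=1]) (use assms in force)
  then have "(\<integral>x. g x \<partial>M) \<le> (\<integral>x. 1 \<partial>M)"
    by (rule integral_mono_AE) (use assms in \<open>auto simp: AE_measure_pmf_iff\<close>)
  moreover have "0 \<le> (\<integral>x. g x \<partial>M)"
    by (rule integral_nonneg_AE) (use assms in \<open>auto simp: AE_measure_pmf_iff\<close>)
  ultimately show ?thesis by simp
qed

lemma integral_measure_pmf_pos:
  fixes g :: "'a \<Rightarrow> real"
  assumes "finite (set_pmf M)" "\<And>x. x \<in> set_pmf M \<Longrightarrow> 0 < g x"
  shows "0 < (\<integral>x. g x \<partial>M)"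
proof -
  have "(\<integral>x. g x \<partial>M) = (\<Sum>a\<in>set_pmf M. g a * pmf M a)"
    by (rule integral_measure_pmf_real) (use assms in auto)
  also have "\<dots> > 0"
    using assms set_pmf_not_empty by (intro sum_pos) (auto simp: set_pmf_iff)
  finally show ?thesis .
qed

lemma bind_pmf_bernoulli_eq_bernoulli_integral:
  assumes "\<And>x. x \<in> set_pmf M \<Longrightarrow> 0 \<le> g x \<and> g x \<le> 1"
  shows "bind_pmf M (\<lambda>x. bernoulli_pmf (g x)) = bernoulli_pmf (\<integral>x. g x \<partial>M)"
proof (rule pmf_eqI)
  fix i :: bool
  have int: "integrable (measure_pmf M) g"
    by (rule integrable_measure_pmf_bounded[where B=1]) (use assms in force)
  have I: "0 \<le> (\<integral>x. g x \<partial>M) \<and> (\<integral>x. g x \<partial>M) \<le> 1"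
    by (rule integral_measure_pmf_unit_interval) (use assms in auto)
  have "pmf (bind_pmf M (\<lambda>x. bernoulli_pmf (g x))) i = (\<integral>x. (if i then g x else 1 - g x) \<partial>M)"
    unfolding pmf_bind by (rule integral_cong_AE) (use assms in \<open>auto simp: AE_measure_pmf_iff\<close>)
  also have "\<dots> = pmf (bernoulli_pmf (\<integral>x. g x \<partial>M)) i"
    using I int by (cases i) (auto simp: integral_diff)
  finally show "pmf (bind_pmf M (\<lambda>x. bernoulli_pmf (g x))) i = pmf (bernoulli_pmf (\<integral>x. g x \<partial>M)) i" .
qed

lemma abs_integral_measure_pmf_minus_le:
  fixes h :: "'a \<Rightarrow> real"
  assumes "\<And>x. x \<in> insert z (set_pmf M) \<Longrightarrow> 0 \<le> h x \<and> h x \<le> 1"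
  shows "\<bar>(\<integral>x. h x \<partial>M) - h z\<bar> \<le> 1 - pmf M z"
proof -
  have hz: "0 \<le> h z" "h z \<le> 1" and hx: "\<And>x. x \<in> set_pmf M \<Longrightarrow> 0 \<le> h x \<and> h x \<le> 1"
    using assms by auto
  have int: "integrable (measure_pmf M) h"
    by (rule integrable_measure_pmf_bounded[where B=1]) (use hx in force)
  have "\<bar>(\<integral>x. h x \<partial>M) - h z\<bar> = \<bar>\<integral>x. h x - h z \<partial>M\<bar>"
    using int by (simp add: integral_diff)
  also have "\<dots> \<le> (\<integral>x. \<bar>h x - h z\<bar> \<partial>M)"
    using integral_norm_bound[of M "\<lambda>x. h x - h z"] by simp
  also have "\<dots> \<le> (\<integral>x. indicator (- {z}) x \<partial>M)"
  proof (intro integral_mono_AE integrable_measure_pmf_bounded[where B=1])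
    have "\<bar>h x - h z\<bar> \<le> indicator (- {z}) x" if "x \<in> set_pmf M" for x
      using hx[OF that] hz by (auto split: split_indicator)
    then show "AE x in M. \<bar>h x - h z\<bar> \<le> indicator (- {z}) x"
      by (simp add: AE_measure_pmf_iff)
  qed (use hx hz in \<open>force split: split_indicator\<close>)+
  also have "\<dots> = 1 - pmf M z"
    using measure_pmf.prob_compl[of "{z}" M] by (simp add: Compl_eq_Diff_UNIV measure_pmf_single)
  finally show ?thesis .
qed

lemma abs_double_integral_measure_pmf_minus_le:
  fixes h :: "'a \<Rightarrow> 'b \<Rightarrow> real"
  assumes "\<And>x y. x \<in> insert z1 (set_pmf M) \<Longrightarrow> y \<in> insert z2 (set_pmf U) \<Longrightarrow> 0 \<le> h x y \<and> h x y \<le> 1"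
  shows "\<bar>(\<integral>x. (\<integral>y. h x y \<partial>U) \<partial>M) - h z1 z2\<bar> \<le> (1 - pmf M z1) + (1 - pmf U z2)"
proof -
  have "\<bar>(\<integral>x. (\<integral>y. h x y \<partial>U) \<partial>M) - (\<integral>y. h z1 y \<partial>U)\<bar> \<le> 1 - pmf M z1"
    using assms by (intro abs_integral_measure_pmf_minus_le integral_measure_pmf_unit_interval) auto
  moreover have "\<bar>(\<integral>y. h z1 y \<partial>U) - h z1 z2\<bar> \<le> 1 - pmf U z2"
    using assms by (intro abs_integral_measure_pmf_minus_le) auto
  ultimately show ?thesis by linarith
qed

lemma measure_bind_accept_reject:
  assumes "\<And>w u. w \<in> set_pmf M \<Longrightarrow> u \<in> set_pmf U \<Longrightarrow> 0 \<le> h w u \<and> h w u \<le> 1"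
  defines "a \<equiv> \<integral>w. (\<integral>u. h w u \<partial>U) \<partial>M"
  shows "measure_pmf.prob (bind_pmf M (\<lambda>w. bind_pmf U (\<lambda>u. bind_pmf (bernoulli_pmf (h w u))
            (\<lambda>acc. return_pmf (if acc then y else z))))) A
       = a * indicator A y + (1 - a) * indicator A z"
proof -
  define G where "G acc = return_pmf (if acc then y else z)" for acc
  have inner: "0 \<le> (\<integral>u. h w u \<partial>U) \<and> (\<integral>u. h w u \<partial>U) \<le> 1" if "w \<in> set_pmf M" for w
    by (rule integral_measure_pmf_unit_interval) (use assms that in auto)
  have "bind_pmf M (\<lambda>w. bind_pmf U (\<lambda>u. bind_pmf (bernoulli_pmf (h w u)) G))
      = bind_pmf (bind_pmf M (\<lambda>w. bind_pmf U (\<lambda>u. bernoulli_pmf (h w u)))) G"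
    by (simp add: bind_assoc_pmf)
  also have "bind_pmf M (\<lambda>w. bind_pmf U (\<lambda>u. bernoulli_pmf (h w u))) = bind_pmf M (\<lambda>w. bernoulli_pmf (\<integral>u. h w u \<partial>U))"
    by (intro bind_pmf_cong refl bind_pmf_bernoulli_eq_bernoulli_integral) (use assms in auto)
  also have "\<dots> = bernoulli_pmf a"
    unfolding a_def by (rule bind_pmf_bernoulli_eq_bernoulli_integral) (use inner in auto)
  finally show ?thesis
    using integral_measure_pmf_unit_interval[of M "\<lambda>w. \<integral>u. h w u \<partial>U"] inner
    by (simp add: G_def measure_bind_bernoulli_pmf a_def)
qed

lemma pmf_embed_pmf_normalized:
  fixes w :: "nat \<Rightarrow> real"
  assumes "\<And>k. 0 \<le> w k" "summable w" "0 < suminf w"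
  shows "pmf (embed_pmf (\<lambda>k. w k / suminf w)) k = w k / suminf w"
proof (rule pmf_embed_pmf)
  show "0 \<le> w k / suminf w" for k using assms by simp
  have "(\<integral>\<^sup>+k. ennreal (w k / suminf w) \<partial>count_space UNIV) = ennreal (\<Sum>k. w k / suminf w)"
    using assms by (simp add: nn_integral_count_space_nat suminf_ennreal2 summable_divide)
  also have "(\<Sum>k. w k / suminf w) = 1"
    using assms by (simp add: suminf_divide)
  finally show "(\<integral>\<^sup>+k. ennreal (w k / suminf w) \<partial>count_space UNIV) = 1" by simp
qed

section \<open>Tail probabilities\<close>

definition tail_prob :: "nat pmf \<Rightarrow> nat \<Rightarrow> real" where
  "tail_prob P k = measure_pmf.prob P {k<..}"

lemma tail_prob_Suc: "tail_prob P k = pmf P (Suc k) + tail_prob P (Suc k)"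
proof -
  have "measure_pmf.prob P ({Suc k} \<union> {Suc k<..}) = measure_pmf.prob P {Suc k} + measure_pmf.prob P {Suc k<..}"
    by (rule measure_pmf.finite_measure_Union) auto
  moreover have "{Suc k} \<union> {Suc k<..} = {k<..}" by auto
  ultimately show ?thesis
    unfolding tail_prob_def by (simp add: measure_pmf_single)
qed

lemma pmf_eq_tail_prob_diff: "1 \<le> k \<Longrightarrow> pmf P k = tail_prob P (k - 1) - tail_prob P k"
  using tail_prob_Suc[of P "k - 1"] by simp

lemma tail_prob_0: "0 \<notin> set_pmf P \<Longrightarrow> tail_prob P 0 = 1"
proof -
  assume "0 \<notin> set_pmf P"
  then have "measure_pmf.prob P (UNIV - {0}) = 1"
    using measure_pmf.prob_compl[of "{0}" P] by (simp add: measure_pmf_single pmf_eq_0_set_pmf)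
  moreover have "UNIV - {0} = {0::nat<..}" by auto
  ultimately show ?thesis by (simp add: tail_prob_def)
qed

lemma tv_dist_le_suminf:
  fixes P Q :: "nat pmf"
  assumes "summable B" "\<And>i. \<bar>pmf P i - pmf Q i\<bar> \<le> B i"
  shows "tv_dist P Q \<le> suminf B"
  unfolding tv_dist_def
proof (rule cSUP_least)
  fix A :: "nat set"
  define g where "g P n = (if n \<in> A then pmf P n else 0)" for P :: "nat pmf" and n
  have "measure_pmf.prob P A = suminf (g P)" for P
    unfolding measure_pmf_conv_infsetsum g_def by (rule infsetsum_nat) auto
  moreover have "summable (g P)" for P
    using pmf_abs_summable[of P A] unfolding abs_summable_on_nat_iff g_def
    by (rule summable_comparison_test') auto
  ultimately have "measure_pmf.prob P A - measure_pmf.prob Q A = (\<Sum>n. g P n - g Q n)"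
    by (simp add: suminf_diff)
  also have "\<bar>\<dots>\<bar> \<le> suminf B"
  proof -
    have "\<bar>g P n - g Q n\<bar> \<le> B n" for n
      using assms(2)[of n] abs_ge_zero[of "pmf P n - pmf Q n"] unfolding g_def by auto
    then show ?thesis using norm_suminf_le[of "\<lambda>n. g P n - g Q n" B] assms(1) by simp
  qed
  finally show "\<bar>measure_pmf.prob P A - measure_pmf.prob Q A\<bar> \<le> suminf B" .
qed simp

lemma le_geometric_if_eventually_contracting:
  fixes w :: "nat \<Rightarrow> real"
  assumes nonneg: "\<And>k. 0 \<le> w k" and "0 < \<sigma>" and contract: "\<And>k. M \<le> k \<Longrightarrow> w (Suc k) \<le> \<sigma> * w k"
  obtains C where "\<And>k. w k \<le> C * \<sigma> ^ k"
proof -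
  have tail: "w k \<le> w M * \<sigma> ^ (k - M)" if "M \<le> k" for k
    using that
  proof (induction k rule: dec_induct)
    case (step k)
    have "w (Suc k) \<le> \<sigma> * w k" using contract[OF step.hyps(1)] .
    also have "\<dots> \<le> w M * \<sigma> ^ (Suc k - M)"
      using step.IH step.hyps(1) \<open>0 < \<sigma>\<close> by (simp add: Suc_diff_le mult_left_mono)
    finally show ?case .
  qed simp
  define C where "C = (\<Sum>j\<le>M. w j / \<sigma> ^ j)"
  have term_le: "w j / \<sigma> ^ j \<le> C" if "j \<le> M" for j
    unfolding C_def by (rule member_le_sum) (use that nonneg \<open>0 < \<sigma>\<close> in auto)
  have "w k \<le> C * \<sigma> ^ k" for k
  proof (cases "k \<le> M")
    case True
    then show ?thesis using term_le[OF True] \<open>0 < \<sigma>\<close> by (simp add: divide_le_eq)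
  next
    case False
    then have "w k \<le> w M * \<sigma> ^ (k - M)" by (intro tail) auto
    also have "\<dots> = w M / \<sigma> ^ M * \<sigma> ^ k"
      using False \<open>0 < \<sigma>\<close> by (simp add: power_diff)
    also have "\<dots> \<le> C * \<sigma> ^ k" using term_le[of M] \<open>0 < \<sigma>\<close> by (intro mult_right_mono) auto
    finally show ?thesis .
  qed
  then show ?thesis by (rule that)
qed

lemma tail_prob_le_geometric:
  fixes \<mu> :: "nat pmf"
  assumes pmf_le: "\<And>n. pmf \<mu> n \<le> C * \<sigma> ^ n" and \<sigma>: "0 < \<sigma>" "\<sigma> < \<rho>" and "\<rho> \<le> 1"
  shows "tail_prob \<mu> k \<le> C / (1 - \<sigma> / \<rho>) * \<rho> ^ k"
proof -
  have "0 \<le> C * \<sigma> ^ 0" by (rule order_trans[OF pmf_nonneg pmf_le])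
  then have C: "0 \<le> C" by simp
  have "tail_prob \<mu> k = (\<Sum>n. if n \<in> {k<..} then pmf \<mu> n else 0)"
    unfolding tail_prob_def measure_pmf_conv_infsetsum by (rule infsetsum_nat) auto
  also have "\<dots> \<le> (\<Sum>n. C * \<rho> ^ k * (\<sigma> / \<rho>) ^ n)"
  proof (rule suminf_le)
    show "summable (\<lambda>n. if n \<in> {k<..} then pmf \<mu> n else 0)"
      using pmf_abs_summable[of \<mu> "{k<..}"] unfolding abs_summable_on_nat_iff
      by (rule summable_comparison_test') auto
    show "summable (\<lambda>n. C * \<rho> ^ k * (\<sigma> / \<rho>) ^ n)"
      using \<sigma> by (intro summable_mult summable_geometric) simp
    show "(if n \<in> {k<..} then pmf \<mu> n else 0) \<le> C * \<rho> ^ k * (\<sigma> / \<rho>) ^ n" for n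
    proof (cases "k < n")
      case True
      have "pmf \<mu> n \<le> C * (\<rho> ^ n * (\<sigma> / \<rho>) ^ n)"
        using pmf_le[of n] \<sigma> by (simp add: power_divide)
      also have "\<dots> \<le> C * (\<rho> ^ k * (\<sigma> / \<rho>) ^ n)"
        using True C \<sigma> assms(4) by (intro mult_left_mono mult_right_mono power_decreasing) auto
      finally show ?thesis using True by (simp add: mult.assoc)
    qed (use C \<sigma> in auto)
  qed
  also have "\<dots> = C / (1 - \<sigma> / \<rho>) * \<rho> ^ k"
    using \<sigma> by (simp add: suminf_mult suminf_geometric)
  finally show ?thesis .
qed

lemma abs_indicator_minus_tail_prob_le:
  assumes f_pos: "\<And>k. 0 < f k" and f_Suc_le: "\<And>k. f (Suc k) \<le> f k"
    and tail: "\<And>k. tail_prob \<mu> k \<le> C * f k"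
  shows "\<bar>indicator {k<..} x - tail_prob \<mu> k\<bar> \<le> (1 / f x + C) * f k"
proof -
  have "\<bar>indicator {k<..} x - tail_prob \<mu> k\<bar> \<le> indicator {k<..} x + tail_prob \<mu> k"
    by (simp add: tail_prob_def split: split_indicator)
  also have "indicator {k<..} x \<le> f k / f x"
    using lift_Suc_antimono_le[of f k x, OF f_Suc_le] f_pos[of k] f_pos[of x]
    by (auto split: split_indicator simp: le_divide_eq)
  also note tail
  finally show ?thesis by (simp add: algebra_simps)
qed

section \<open>Birth--death chains with drift towards the origin\<close>

(* Geometric from J on; below J it is built backwards, the increment f (k - 1) - f k being
   q (k + 1) * (f k - f (k + 1)) / (2 * p k + 1), strictly less than the largest increment
   the drift inequality at k tolerates. *)
function drift_profile :: "(nat \<Rightarrow> real) \<Rightarrow> (nat \<Rightarrow> real) \<Rightarrow> real \<Rightarrow> nat \<Rightarrow> nat \<Rightarrow> real" where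
  "drift_profile p q \<rho> J k =
     (if J \<le> k then \<rho> ^ k
      else drift_profile p q \<rho> J (Suc k)
           + q (Suc (Suc k)) * (drift_profile p q \<rho> J (Suc k) - drift_profile p q \<rho> J (Suc (Suc k)))
             / (2 * p (Suc k) + 1))"
  by auto
termination by (relation "Wellfounded.measure (\<lambda>(p, q, \<rho>, J, k). J - k)") auto

declare drift_profile.simps [simp del]

lemma drift_profile_geometric: "J \<le> k \<Longrightarrow> drift_profile p q \<rho> J k = \<rho> ^ k"
  by (simp add: drift_profile.simps)

(* The condition p m + q (Suc m) \<le> 1 is what makes dual_step below a positive operator. *)
locale birth_death_chain =
  fixes K :: "nat \<Rightarrow> nat pmf" and p q :: "nat \<Rightarrow> real" and p_lim q_lim :: real
  assumes prob_K: "\<And>m A. 1 \<le> m \<Longrightarrow> measure_pmf.prob (K m) A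
      = p m * indicator A (Suc m) + q m * indicator A (m - 1) + (1 - p m - q m) * indicator A m"
    and q_1: "q 1 = 0"
    and q_pos: "\<And>m. 2 \<le> m \<Longrightarrow> 0 < q m"
    and p_nonneg: "\<And>m. 1 \<le> m \<Longrightarrow> 0 \<le> p m"
    and p_plus_q_Suc_le: "\<And>m. 1 \<le> m \<Longrightarrow> p m + q (Suc m) \<le> 1"
    and p_tendsto: "p \<longlonglongrightarrow> p_lim"
    and q_tendsto: "q \<longlonglongrightarrow> q_lim"
    and drift_to_left: "p_lim < q_lim"
begin

lemma p_lim_nonneg: "0 \<le> p_lim"
  using p_tendsto by (rule LIMSEQ_le_const) (use p_nonneg in auto)

lemma q_lim_pos: "0 < q_lim"
  using p_lim_nonneg drift_to_left by linarith

lemma zero_notin_set_pmf_K: "1 \<le> m \<Longrightarrow> 0 \<notin> set_pmf (K m)"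
proof -
  assume "1 \<le> m"
  then have "pmf (K m) 0 = 0"
    using prob_K[of m "{0}"] q_1 by (cases "m = 1") (auto simp: measure_pmf_single)
  then show ?thesis by (simp add: set_pmf_iff)
qed

lemma zero_notin_set_pmf_bind: "0 \<notin> set_pmf \<nu> \<Longrightarrow> 0 \<notin> set_pmf (bind_pmf \<nu> K)"
  using zero_notin_set_pmf_K by (auto simp: set_bind_pmf) (metis One_nat_def Suc_leI neq0_conv)

lemma zero_notin_set_pmf_kpow: "1 \<le> x \<Longrightarrow> 0 \<notin> set_pmf (kpow K n x)"
proof (induction n)
  case (Suc n)
  then show ?case using zero_notin_set_pmf_bind by simp
qed simp

lemma tail_prob_bind:
  assumes "0 \<notin> set_pmf \<nu>"
  shows "tail_prob (bind_pmf \<nu> K) k = tail_prob \<nu> k + p k * pmf \<nu> k - q (Suc k) * pmf \<nu> (Suc k)"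
proof -
  have K_tail: "measure_pmf.prob (K m) {k<..}
      = indicator {k<..} m + p k * indicator {k} m - q (Suc k) * indicator {Suc k} m"
    if "m \<in> set_pmf \<nu>" for m
  proof -
    have "1 \<le> m" using assms that by (cases m) auto
    then have eq: "measure_pmf.prob (K m) {k<..}
        = p m * indicator {k<..} (Suc m) + q m * indicator {k<..} (m - 1) + (1 - p m - q m) * indicator {k<..} m"
      by (rule prob_K)
    consider "m < k" | "m = k" | "m = Suc k" | "Suc k < m" by linarith
    then show ?thesis
      using eq by cases (auto simp: indicator_def)
  qed
  have integrable: "integrable (measure_pmf \<nu>) (\<lambda>m. c * indicator A m :: real)" for A :: "nat set" and c
    by (rule integrable_measure_pmf_bounded[where B="\<bar>c\<bar>"]) (auto split: split_indicator)
  have "tail_prob (bind_pmf \<nu> K) k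
      = (\<integral>m. indicator {k<..} m + p k * indicator {k} m - q (Suc k) * indicator {Suc k} m \<partial>\<nu>)"
    unfolding tail_prob_def measure_bind_pmf
    by (rule integral_cong_AE) (use K_tail in \<open>auto simp: AE_measure_pmf_iff\<close>)
  also have "\<dots> = tail_prob \<nu> k + p k * pmf \<nu> k - q (Suc k) * pmf \<nu> (Suc k)"
    using integrable[of 1] integrable
    by (simp add: tail_prob_def integral_diff integral_add measure_pmf_single)
  finally show ?thesis .
qed

lemma bind_pmf_eq_if_detailed_balance:
  assumes "0 \<notin> set_pmf \<mu>" and balance: "\<And>k. p k * pmf \<mu> k = q (Suc k) * pmf \<mu> (Suc k)"
  shows "bind_pmf \<mu> K = \<mu>"
proof (rule pmf_eqI)
  fix i
  have "tail_prob (bind_pmf \<mu> K) k = tail_prob \<mu> k" for k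
    using tail_prob_bind[OF assms(1)] balance by simp
  moreover have "pmf (bind_pmf \<mu> K) 0 = 0" "pmf \<mu> 0 = 0"
    using zero_notin_set_pmf_bind[OF assms(1)] assms(1) by (simp_all add: pmf_eq_0_set_pmf)
  ultimately show "pmf (bind_pmf \<mu> K) i = pmf \<mu> i"
    using pmf_eq_tail_prob_diff[of i] by (cases "i = 0") auto
qed

fun balance_weight :: "nat \<Rightarrow> real" where
  "balance_weight 0 = 0"
| "balance_weight (Suc 0) = 1"
| "balance_weight (Suc (Suc k)) = balance_weight (Suc k) * p (Suc k) / q (Suc (Suc k))"

lemma balance_weight_nonneg: "0 \<le> balance_weight k"
proof (induction k rule: balance_weight.induct)
  case (3 k)
  then show ?case using p_nonneg[of "Suc k"] q_pos[of "Suc (Suc k)"] by simp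
qed simp_all

lemma detailed_balance: "p k * balance_weight k = q (Suc k) * balance_weight (Suc k)"
proof (cases k)
  case (Suc j)
  then show ?thesis using q_pos[of "Suc (Suc j)"] by simp
qed (use q_1 in simp)

lemma balance_weight_le_geometric:
  assumes "p_lim < \<sigma> * q_lim" "0 < \<sigma>"
  obtains C where "\<And>k. balance_weight k \<le> C * \<sigma> ^ k"
proof -
  have "(\<lambda>k. p k / q (Suc k)) \<longlonglongrightarrow> p_lim / q_lim"
    using q_lim_pos by (intro tendsto_divide p_tendsto LIMSEQ_Suc[OF q_tendsto]) simp
  moreover have "p_lim / q_lim < \<sigma>"
    using assms q_lim_pos by (simp add: divide_less_eq)
  ultimately have "\<forall>\<^sub>F k in sequentially. p k / q (Suc k) < \<sigma>"
    by (rule order_tendstoD(2))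
  then obtain M where M: "\<And>k. M \<le> k \<Longrightarrow> p k / q (Suc k) < \<sigma>" and "1 \<le> M"
    unfolding eventually_sequentially by (metis le_trans nat_le_linear)
  have contract: "balance_weight (Suc k) \<le> \<sigma> * balance_weight k" if k: "M \<le> k" for k
  proof -
    obtain j where "k = Suc j" using k \<open>1 \<le> M\<close> by (cases k) auto
    then have "balance_weight (Suc k) = balance_weight k * (p k / q (Suc k))" by simp
    also have "\<dots> \<le> balance_weight k * \<sigma>"
      using M[OF k] balance_weight_nonneg[of k] by (intro mult_left_mono) auto
    finally show ?thesis by (simp add: mult.commute)
  qed
  show ?thesis
    using le_geometric_if_eventually_contracting[where w=balance_weight,
        OF balance_weight_nonneg assms(2) contract] that
    by blast
qed

lemma invariant_pmf_exists:
  assumes "p_lim < \<rho> * q_lim" "\<rho> \<le> 1"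
  obtains \<mu> C where "0 \<notin> set_pmf \<mu>" "bind_pmf \<mu> K = \<mu>" "\<And>k. tail_prob \<mu> k \<le> C * \<rho> ^ k"
proof -
  define \<sigma> where "\<sigma> = (p_lim / q_lim + \<rho>) / 2"
  have "p_lim / q_lim < \<rho>" using assms q_lim_pos by (simp add: divide_less_eq)
  then have \<sigma>: "0 < \<sigma>" "\<sigma> < \<rho>" "p_lim < \<sigma> * q_lim"
    using p_lim_nonneg q_lim_pos by (auto simp: \<sigma>_def field_simps)
  obtain Cw where Cw: "\<And>k. balance_weight k \<le> Cw * \<sigma> ^ k"
    using balance_weight_le_geometric[OF \<sigma>(3,1)] by blast
  have summable: "summable balance_weight"
    using \<sigma> assms(2) Cw balance_weight_nonneg
    by (intro summable_comparison_test'[OF summable_mult[OF summable_geometric]]) auto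
  define Z where "Z = suminf balance_weight"
  have "sum balance_weight {1} \<le> Z"
    unfolding Z_def by (rule sum_le_suminf[OF summable]) (use balance_weight_nonneg in auto)
  then have Z: "1 \<le> Z" by simp
  define \<mu> where "\<mu> = embed_pmf (\<lambda>k. balance_weight k / Z)"
  have pmf_\<mu>: "pmf \<mu> k = balance_weight k / Z" for k
    unfolding \<mu>_def Z_def
    by (rule pmf_embed_pmf_normalized) (use balance_weight_nonneg summable Z in \<open>auto simp: Z_def\<close>)
  have support: "0 \<notin> set_pmf \<mu>" by (simp add: set_pmf_iff pmf_\<mu>)
  show ?thesis
  proof (rule that[OF support])
    show "bind_pmf \<mu> K = \<mu>"
      using support by (rule bind_pmf_eq_if_detailed_balance) (simp add: pmf_\<mu> detailed_balance)
    have "pmf \<mu> n \<le> Cw / Z * \<sigma> ^ n" for n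
      using Cw[of n] Z by (simp add: pmf_\<mu> divide_right_mono)
    then show "tail_prob \<mu> k \<le> Cw / Z / (1 - \<sigma> / \<rho>) * \<rho> ^ k" for k
      using \<sigma>(1,2) assms(2) by (rule tail_prob_le_geometric)
  qed
qed

(* The birth--death operator with the roles of p and q exchanged; it propagates tail probabilities. *)
definition dual_step :: "(nat \<Rightarrow> real) \<Rightarrow> nat \<Rightarrow> real" where
  "dual_step g k = p k * g (k - 1) + (1 - p k - q (Suc k)) * g k + q (Suc k) * g (Suc k)"

lemma tail_prob_bind_eq_dual_step:
  assumes "0 \<notin> set_pmf \<nu>" "1 \<le> k"
  shows "tail_prob (bind_pmf \<nu> K) k = dual_step (tail_prob \<nu>) k"
  using tail_prob_bind[OF assms(1), of k] pmf_eq_tail_prob_diff[OF assms(2), of \<nu>]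
    pmf_eq_tail_prob_diff[of "Suc k" \<nu>]
  by (simp add: dual_step_def algebra_simps)

lemma dual_step_diff: "dual_step (\<lambda>j. g j - h j) k = dual_step g k - dual_step h k"
  by (simp add: dual_step_def algebra_simps)

lemma abs_dual_step_le:
  assumes "1 \<le> k" "\<And>j. \<bar>g j\<bar> \<le> h j"
  shows "\<bar>dual_step g k\<bar> \<le> dual_step h k"
proof -
  have coeffs: "0 \<le> p k" "0 \<le> 1 - p k - q (Suc k)" "0 \<le> q (Suc k)"
    using p_nonneg[OF assms(1)] p_plus_q_Suc_le[OF assms(1)] q_pos[of "Suc k"] assms(1) by auto
  have "\<bar>dual_step g k\<bar>
      \<le> \<bar>p k * g (k - 1)\<bar> + \<bar>(1 - p k - q (Suc k)) * g k\<bar> + \<bar>q (Suc k) * g (Suc k)\<bar>"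
    unfolding dual_step_def by (rule order_trans[OF abs_triangle_ineq add_right_mono[OF abs_triangle_ineq]])
  also have "\<dots> = p k * \<bar>g (k - 1)\<bar> + (1 - p k - q (Suc k)) * \<bar>g k\<bar> + q (Suc k) * \<bar>g (Suc k)\<bar>"
    using coeffs by (simp add: abs_mult)
  also have "\<dots> \<le> dual_step h k"
    unfolding dual_step_def using coeffs assms(2) by (intro add_mono mult_left_mono) auto
  finally show ?thesis .
qed

lemma drift_profile_decreasing:
  assumes "0 < \<rho>" "\<rho> < 1"
  shows "0 < drift_profile p q \<rho> J (Suc k) \<and> drift_profile p q \<rho> J (Suc k) < drift_profile p q \<rho> J k"
proof (induction "J - k" arbitrary: k)
  case 0
  then show ?case using assms by (simp add: drift_profile.simps)
next
  case (Suc d)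
  let ?f = "drift_profile p q \<rho> J"
  have "k < J" "d = J - Suc k" using Suc.hyps(2) by auto
  from this(2) have IH: "0 < ?f (Suc (Suc k)) \<and> ?f (Suc (Suc k)) < ?f (Suc k)"
    by (rule Suc.hyps(1))
  have "0 < q (Suc (Suc k)) * (?f (Suc k) - ?f (Suc (Suc k))) / (2 * p (Suc k) + 1)"
    using IH q_pos[of "Suc (Suc k)"] p_nonneg[of "Suc k"] by simp
  moreover have "?f k = ?f (Suc k) + q (Suc (Suc k)) * (?f (Suc k) - ?f (Suc (Suc k))) / (2 * p (Suc k) + 1)"
    using \<open>k < J\<close> by (subst drift_profile.simps) simp
  ultimately show ?case using IH by linarith
qed

lemma dual_step_drift_profile_less:
  assumes "0 < \<rho>" "\<rho> < 1" "1 \<le> k" "k \<le> J"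
  shows "dual_step (drift_profile p q \<rho> J) k < drift_profile p q \<rho> J k"
proof -
  let ?f = "drift_profile p q \<rho> J"
  define X where "X = q (Suc k) * (?f k - ?f (Suc k))"
  have X: "0 < X"
    unfolding X_def using drift_profile_decreasing[OF assms(1,2), of J k] q_pos[of "Suc k"] assms(3)
    by simp
  have "?f (k - 1) = ?f k + X / (2 * p k + 1)"
    using assms(3,4) by (subst drift_profile.simps) (simp add: X_def)
  then have "dual_step ?f k = ?f k - (X - p k * (X / (2 * p k + 1)))"
    by (simp add: dual_step_def X_def algebra_simps)
  moreover have "p k * (X / (2 * p k + 1)) < X"
    using X p_nonneg[OF assms(3)] by (simp add: divide_less_eq)
  ultimately show ?thesis by linarith
qed

lemma drift_profile_lower_bound:
  assumes "0 < \<rho>" "\<rho> < 1"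
  shows "\<rho> ^ J * \<rho> ^ k \<le> drift_profile p q \<rho> J k"
proof (cases "J \<le> k")
  case True
  have "\<rho> ^ J * \<rho> ^ k \<le> 1 * \<rho> ^ k"
    using assms by (intro mult_right_mono power_le_one) auto
  then show ?thesis using True by (simp add: drift_profile_geometric)
next
  case False
  have "\<rho> ^ J * \<rho> ^ k \<le> \<rho> ^ J * 1"
    using assms by (intro mult_left_mono power_le_one) auto
  also have "\<dots> = drift_profile p q \<rho> J J" by (simp add: drift_profile_geometric)
  also have "\<dots> \<le> drift_profile p q \<rho> J k"
  proof (rule lift_Suc_antimono_le[of "drift_profile p q \<rho> J"])
    show "drift_profile p q \<rho> J (Suc n) \<le> drift_profile p q \<rho> J n" for n
      using drift_profile_decreasing[OF assms, of J n] by simp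
  qed (use False in simp)
  finally show ?thesis .
qed

lemma summable_drift_profile:
  assumes "0 < \<rho>" "\<rho> < 1"
  shows "summable (drift_profile p q \<rho> J)"
  using assms by (intro summable_comparison_test'[OF summable_geometric[of \<rho>], of J])
     (simp_all add: drift_profile_geometric)

lemma geometric_drift_eventually:
  assumes \<rho>: "p_lim < \<rho> * q_lim" "0 < \<rho>" "\<rho> < 1"
  obtains \<alpha>\<^sub>0 J where "\<alpha>\<^sub>0 < 1" "1 \<le> J" "\<And>k. J \<le> k \<Longrightarrow> dual_step (\<lambda>j. \<rho> ^ j) k \<le> \<alpha>\<^sub>0 * \<rho> ^ k"
proof -
  define E where "E k = p k / \<rho> + (1 - p k - q (Suc k)) + q (Suc k) * \<rho>" for k
  define E_lim where "E_lim = p_lim / \<rho> + (1 - p_lim - q_lim) + q_lim * \<rho>"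
  have "E \<longlonglongrightarrow> E_lim"
    unfolding E_def E_lim_def using \<rho>(2)
    by (intro tendsto_intros p_tendsto LIMSEQ_Suc[OF q_tendsto]) simp
  moreover have "E_lim < 1"
  proof -
    have "p_lim / \<rho> < q_lim" using \<rho> by (simp add: divide_less_eq mult.commute)
    then have "(1 - \<rho>) * (p_lim / \<rho> - q_lim) < 0"
      using \<rho>(3) by (intro mult_pos_neg) auto
    moreover have "E_lim - 1 = (1 - \<rho>) * (p_lim / \<rho> - q_lim)"
      using \<rho>(2) by (simp add: E_lim_def field_simps)
    ultimately show ?thesis by linarith
  qed
  then have "E_lim < (1 + E_lim) / 2" "(1 + E_lim) / 2 < 1" by simp_all
  ultimately have "\<forall>\<^sub>F k in sequentially. E k < (1 + E_lim) / 2" by (intro order_tendstoD(2))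
  then obtain J where J: "\<And>k. J \<le> k \<Longrightarrow> E k < (1 + E_lim) / 2" and "1 \<le> J"
    unfolding eventually_sequentially by (metis le_trans nat_le_linear)
  have "dual_step (\<lambda>j. \<rho> ^ j) k \<le> (1 + E_lim) / 2 * \<rho> ^ k" if "J \<le> k" for k
  proof -
    have "dual_step (\<lambda>j. \<rho> ^ j) k = \<rho> ^ k * E k"
      using that \<open>1 \<le> J\<close> \<rho>(2) by (cases k) (simp_all add: dual_step_def E_def field_simps)
    also have "\<dots> \<le> \<rho> ^ k * ((1 + E_lim) / 2)"
      using J[OF that] \<rho>(2) by (intro mult_left_mono) auto
    finally show ?thesis by (simp add: mult.commute)
  qed
  with \<open>(1 + E_lim) / 2 < 1\<close> \<open>1 \<le> J\<close> show ?thesis by (rule that)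
qed

lemma drift_function_exists:
  assumes \<rho>: "p_lim < \<rho> * q_lim" "0 < \<rho>" "\<rho> < 1"
  obtains f \<alpha> c where "\<And>k. 0 < f k" "\<And>k. f (Suc k) \<le> f k" "summable f"
    "0 < c" "\<And>k. c * \<rho> ^ k \<le> f k"
    "0 \<le> \<alpha>" "\<alpha> < 1" "\<And>k. 1 \<le> k \<Longrightarrow> dual_step f k \<le> \<alpha> * f k"
proof -
  obtain \<alpha>\<^sub>0 J where "\<alpha>\<^sub>0 < 1" "1 \<le> J" and far: "\<And>k. J \<le> k \<Longrightarrow> dual_step (\<lambda>j. \<rho> ^ j) k \<le> \<alpha>\<^sub>0 * \<rho> ^ k"
    using geometric_drift_eventually[OF \<rho>] by blast
  define f where "f = drift_profile p q \<rho> J"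
  have f_geometric: "f k = \<rho> ^ k" if "J \<le> k" for k
    using that unfolding f_def by (rule drift_profile_geometric)
  have f_pos: "0 < f k" and f_Suc_less: "f (Suc k) < f k" for k
    using drift_profile_decreasing[OF \<rho>(2,3), of J] unfolding f_def by (metis less_trans)+
  define \<alpha> where "\<alpha> = max 0 (max \<alpha>\<^sub>0 (MAX k\<in>{1..J}. dual_step f k / f k))"
  have "(MAX k\<in>{1..J}. dual_step f k / f k) < 1"
    using \<open>1 \<le> J\<close> dual_step_drift_profile_less[OF \<rho>(2,3)] f_pos
    by (subst Max_less_iff) (auto simp: f_def divide_less_eq)
  then have "\<alpha> < 1" using \<open>\<alpha>\<^sub>0 < 1\<close> by (simp add: \<alpha>_def)
  have drift: "dual_step f k \<le> \<alpha> * f k" if "1 \<le> k" for k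
  proof (cases "k \<le> J")
    case True
    have "dual_step f k / f k \<le> \<alpha>"
      unfolding \<alpha>_def using True that by (intro max.coboundedI2 max.coboundedI2 Max_ge) auto
    then show ?thesis using f_pos[of k] by (simp add: divide_le_eq)
  next
    case False
    then have "dual_step f k = dual_step (\<lambda>j. \<rho> ^ j) k"
      using f_geometric[of "k - 1"] f_geometric[of k] f_geometric[of "Suc k"] by (simp add: dual_step_def)
    also have "\<dots> \<le> \<alpha>\<^sub>0 * f k" using False far[of k] f_geometric[of k] by simp
    also have "\<dots> \<le> \<alpha> * f k" using f_pos[of k] by (intro mult_right_mono) (auto simp: \<alpha>_def)
    finally show ?thesis .
  qed
  show ?thesis
  proof (rule that[of f "\<rho> ^ J" \<alpha>])
    show "f (Suc k) \<le> f k" for k using f_Suc_less[of k] by simp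
    show "summable f" unfolding f_def using \<rho>(2,3) by (rule summable_drift_profile)
    show "\<rho> ^ J * \<rho> ^ k \<le> f k" for k unfolding f_def using \<rho>(2,3) by (rule drift_profile_lower_bound)
    show "0 < \<rho> ^ J" using \<rho>(2) by simp
    show "0 \<le> \<alpha>" by (simp add: \<alpha>_def)
  qed (use f_pos \<open>\<alpha> < 1\<close> drift in auto)
qed

lemma abs_tail_prob_diff_kpow_le:
  assumes \<mu>: "0 \<notin> set_pmf \<mu>" "bind_pmf \<mu> K = \<mu>" and x: "1 \<le> x"
    and f: "\<And>k. 0 \<le> f k" "\<And>k. 1 \<le> k \<Longrightarrow> dual_step f k \<le> \<alpha> * f k"
    and \<alpha>: "0 \<le> \<alpha>" and S: "0 \<le> S"
    and start: "\<And>k. \<bar>indicator {k<..} x - tail_prob \<mu> k\<bar> \<le> S * f k"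
  shows "\<bar>tail_prob (kpow K n x) k - tail_prob \<mu> k\<bar> \<le> \<alpha> ^ n * S * f k"
proof (induction n arbitrary: k)
  case 0
  then show ?case using start by (simp add: tail_prob_def)
next
  case (Suc n)
  let ?\<Delta> = "\<lambda>j. tail_prob (kpow K n x) j - tail_prob \<mu> j"
  show ?case
  proof (cases "k = 0")
    case True
    then show ?thesis
      using tail_prob_0[OF zero_notin_set_pmf_kpow[OF x]] tail_prob_0[OF \<mu>(1)] f(1) \<alpha> S
      by (simp del: kpow.simps)
  next
    case False
    then have "1 \<le> k" by simp
    have "tail_prob (kpow K (Suc n) x) k - tail_prob \<mu> k = dual_step ?\<Delta> k"
      using tail_prob_bind_eq_dual_step[OF zero_notin_set_pmf_kpow[OF x] \<open>1 \<le> k\<close>]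
        tail_prob_bind_eq_dual_step[OF \<mu>(1) \<open>1 \<le> k\<close>] \<mu>(2)
      by (simp add: dual_step_diff)
    also have "\<bar>\<dots>\<bar> \<le> dual_step (\<lambda>j. \<alpha> ^ n * S * f j) k"
      using \<open>1 \<le> k\<close> Suc.IH by (rule abs_dual_step_le)
    also have "\<dots> = \<alpha> ^ n * S * dual_step f k"
      by (simp add: dual_step_def algebra_simps)
    also have "\<dots> \<le> \<alpha> ^ n * S * (\<alpha> * f k)"
      using f(2)[OF \<open>1 \<le> k\<close>] \<alpha> S by (intro mult_left_mono) auto
    also have "\<dots> = \<alpha> ^ Suc n * S * f k"
      by (simp add: algebra_simps)
    finally show ?thesis .
  qed
qed

lemma tv_dist_kpow_le:
  assumes \<mu>: "0 \<notin> set_pmf \<mu>" "bind_pmf \<mu> K = \<mu>" and x: "1 \<le> x"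
    and f: "\<And>k. 0 \<le> f k" "summable f" "\<And>k. 1 \<le> k \<Longrightarrow> dual_step f k \<le> \<alpha> * f k"
    and \<alpha>: "0 \<le> \<alpha>" and S: "0 \<le> S"
    and start: "\<And>k. \<bar>indicator {k<..} x - tail_prob \<mu> k\<bar> \<le> S * f k"
  shows "tv_dist (kpow K n x) \<mu> \<le> \<alpha> ^ n * S * (\<Sum>i. f (i - 1) + f i)"
proof -
  have tails: "\<bar>tail_prob (kpow K n x) k - tail_prob \<mu> k\<bar> \<le> \<alpha> ^ n * S * f k" for k
    using abs_tail_prob_diff_kpow_le[OF \<mu> x f(1,3) \<alpha> S start] .
  have "summable (\<lambda>i. f (i - 1))"
    using f(2) by (subst summable_Suc_iff[symmetric]) simp
  then have summable: "summable (\<lambda>i. f (i - 1) + f i)"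
    using f(2) by (rule summable_add)
  have "\<bar>pmf (kpow K n x) i - pmf \<mu> i\<bar> \<le> \<alpha> ^ n * S * (f (i - 1) + f i)" for i
  proof (cases "i = 0")
    case True
    have "pmf (kpow K n x) 0 = 0" "pmf \<mu> 0 = 0"
      unfolding pmf_eq_0_set_pmf by (fact zero_notin_set_pmf_kpow[OF x] \<mu>(1))+
    then show ?thesis
      using True f(1) \<alpha> S by simp
  next
    case False
    then have "1 \<le> i" by simp
    then have "\<bar>pmf (kpow K n x) i - pmf \<mu> i\<bar>
        \<le> \<bar>tail_prob (kpow K n x) (i - 1) - tail_prob \<mu> (i - 1)\<bar> + \<bar>tail_prob (kpow K n x) i - tail_prob \<mu> i\<bar>"
      unfolding pmf_eq_tail_prob_diff[OF \<open>1 \<le> i\<close>] by linarith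
    also have "\<dots> \<le> \<alpha> ^ n * S * (f (i - 1) + f i)"
      using tails[of "i - 1"] tails[of i] by (simp add: distrib_left)
    finally show ?thesis .
  qed
  then have "tv_dist (kpow K n x) \<mu> \<le> (\<Sum>i. \<alpha> ^ n * S * (f (i - 1) + f i))"
    by (intro tv_dist_le_suminf summable_mult summable)
  also have "\<dots> = \<alpha> ^ n * S * (\<Sum>i. f (i - 1) + f i)"
    by (rule suminf_mult[OF summable])
  finally show ?thesis .
qed

theorem geometrically_ergodic: "geometrically_ergodic {m. m \<ge> 1} K"
proof -
  define \<rho> where "\<rho> = (p_lim / q_lim + 1) / 2"
  have "p_lim / q_lim < 1" using drift_to_left q_lim_pos by simp
  then have \<rho>: "p_lim < \<rho> * q_lim" "0 < \<rho>" "\<rho> < 1"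
    using p_lim_nonneg q_lim_pos by (auto simp: \<rho>_def field_simps)
  obtain \<mu> C\<^sub>\<mu> where \<mu>: "0 \<notin> set_pmf \<mu>" "bind_pmf \<mu> K = \<mu>"
    and tail_\<mu>: "\<And>k. tail_prob \<mu> k \<le> C\<^sub>\<mu> * \<rho> ^ k"
    using invariant_pmf_exists[OF \<rho>(1) less_imp_le[OF \<rho>(3)]] by blast
  obtain f \<alpha> c where f_pos: "\<And>k. 0 < f k" and f_Suc_le: "\<And>k. f (Suc k) \<le> f k"
    and "summable f" "0 < c" and f_lower: "\<And>k. c * \<rho> ^ k \<le> f k"
    and \<alpha>: "0 \<le> \<alpha>" "\<alpha> < 1" and drift: "\<And>k. 1 \<le> k \<Longrightarrow> dual_step f k \<le> \<alpha> * f k"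
    using drift_function_exists[OF \<rho>] by metis
  define C where "C = max 0 (C\<^sub>\<mu> / c)"
  have "tail_prob \<mu> k \<le> C * f k" for k
    using tail_\<mu>[of k] mult_mono[OF _ f_lower[of k], of "C\<^sub>\<mu> / c" C] \<open>0 < c\<close> \<rho>(2)
    by (simp add: C_def)
  note start = abs_indicator_minus_tail_prob_le[OF f_pos f_Suc_le this]
  define F where "F = (\<Sum>i. f (i - 1) + f i)"
  define V where "V x = 1 + 1 / f x + C" for x
  have "tv_dist (kpow K n x) \<mu> \<le> F * V x * \<alpha> ^ n" if "1 \<le> x" for x n
  proof -
    have "0 \<le> 1 / f x + C" using f_pos[of x] by (simp add: C_def)
    with tv_dist_kpow_le[OF \<mu> that less_imp_le[OF f_pos] \<open>summable f\<close> drift \<alpha>(1) _ start]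
    have "tv_dist (kpow K n x) \<mu> \<le> \<alpha> ^ n * (1 / f x + C) * F"
      unfolding F_def by blast
    also have "\<dots> \<le> \<alpha> ^ n * V x * F"
    proof (intro mult_right_mono mult_left_mono)
      show "0 \<le> F"
        unfolding F_def using f_pos \<open>summable f\<close> summable_Suc_iff[of "\<lambda>i. f (i - 1)"]
        by (intro suminf_nonneg summable_add) (auto simp: less_imp_le)
    qed (use \<alpha>(1) in \<open>simp_all add: V_def\<close>)
    finally show ?thesis by (simp only: mult_ac)
  qed
  moreover have "1 \<le> V x" for x
    using f_pos[of x] by (simp add: V_def C_def)
  moreover have "set_pmf \<mu> \<subseteq> {m. m \<ge> 1}"
    using \<mu>(1) by (auto simp: Suc_le_eq intro!: gr0I)
  ultimately show ?thesis
    unfolding geometrically_ergodic_def using \<mu>(2) \<alpha>(2) by blast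
qed

end

section \<open>The noisy Metropolis--Hastings chain\<close>

lemma mh_ratio_up:
  assumes "1 \<le> m" "0 < \<theta>" "\<theta> < 1"
  shows "pi_geom (int m + 1) * q_rw \<theta> (int m + 1) (int m) / (pi_geom (int m) * q_rw \<theta> (int m) (int m + 1))
         = (1 - \<theta>) / (2 * \<theta>)"
proof -
  have "nat (int m + 1) = Suc m" by simp
  then have "pi_geom (int m + 1) = (1/2) ^ m / 2" by (simp add: pi_geom_def)
  moreover have "pi_geom (int m) = (1/2) ^ m" using assms(1) by (simp add: pi_geom_def)
  moreover have "q_rw \<theta> (int m + 1) (int m) = 1 - \<theta>" "q_rw \<theta> (int m) (int m + 1) = \<theta>"
    by (simp_all add: q_rw_def)
  ultimately show ?thesis using assms(2,3) by (simp only:) (simp add: field_simps)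
qed

lemma mh_ratio_down:
  assumes "2 \<le> m" "0 < \<theta>" "\<theta> < 1"
  shows "pi_geom (int m - 1) * q_rw \<theta> (int m - 1) (int m) / (pi_geom (int m) * q_rw \<theta> (int m) (int m - 1))
         = 2 * \<theta> / (1 - \<theta>)"
proof -
  have "nat (int m - 1) = m - 1" using assms(1) by simp
  then have "pi_geom (int m - 1) = (1/2) ^ (m - 1)" using assms(1) by (simp add: pi_geom_def)
  moreover have "pi_geom (int m) = (1/2) ^ (m - 1) / 2"
    using assms(1) power_Suc2[of "1/2::real" "m - 1"] by (simp add: pi_geom_def Suc_diff_le)
  moreover have "q_rw \<theta> (int m - 1) (int m) = \<theta>" "q_rw \<theta> (int m) (int m - 1) = 1 - \<theta>"
    by (simp_all add: q_rw_def)
  ultimately show ?thesis using assms(2,3) by (simp only:) (simp add: field_simps)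
qed

definition noisy_move :: "(nat \<Rightarrow> real) \<Rightarrow> (nat \<Rightarrow> real) \<Rightarrow> nat \<Rightarrow> real \<Rightarrow> nat \<Rightarrow> nat \<Rightarrow> nat pmf" where
  "noisy_move b \<epsilon> N c m y =
     bind_pmf (weight_pmf b \<epsilon> N m) (\<lambda>w.
     bind_pmf (weight_pmf b \<epsilon> N y) (\<lambda>u.
     bind_pmf (bernoulli_pmf (min 1 (c * (u / w)))) (\<lambda>acc.
     return_pmf (if acc then y else m))))"

lemma noisy_mh_eq_noisy_moves:
  assumes "1 \<le> m" "0 < \<theta>" "\<theta> < 1"
  shows "noisy_mh \<theta> b \<epsilon> N m =
    bind_pmf (bernoulli_pmf \<theta>) (\<lambda>up.
      if up then noisy_move b \<epsilon> N ((1 - \<theta>) / (2 * \<theta>)) m (Suc m)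
      else if m = 1 then return_pmf m
      else noisy_move b \<epsilon> N (2 * \<theta> / (1 - \<theta>)) m (m - 1))"
proof -
  have "m \<noteq> 0" using assms(1) by simp
  show ?thesis
    unfolding noisy_mh_def if_not_P[OF \<open>m \<noteq> 0\<close>]
  proof (rule bind_pmf_cong[OF refl], goal_cases)
    case (1 up)
    consider "up" | "\<not> up" "m = 1" | "\<not> up" "2 \<le> m" using assms(1) by linarith
    then show ?case
    proof cases
      case 1
      have "nat (int m + 1) = Suc m" "\<not> int m + 1 \<le> 0" by simp_all
      with 1 show ?thesis
        unfolding Let_def by (simp only: if_True if_False mh_ratio_up[OF assms] noisy_move_def)
    next
      case 2
      then show ?thesis by (simp add: Let_def)
    next
      case 3
      then have "nat (int m - 1) = m - 1" "\<not> int m - 1 \<le> 0" "m \<noteq> 1" by simp_all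
      with 3 show ?thesis
        unfolding Let_def by (simp only: if_True if_False mh_ratio_down[OF \<open>2 \<le> m\<close> assms(2,3)] noisy_move_def)
    qed
  qed
qed

definition accept_prob :: "(nat \<Rightarrow> real) \<Rightarrow> (nat \<Rightarrow> real) \<Rightarrow> nat \<Rightarrow> real \<Rightarrow> nat \<Rightarrow> nat \<Rightarrow> real" where
  "accept_prob b \<epsilon> N c m y = (\<integral>w. (\<integral>u. min 1 (c * (u / w)) \<partial>weight_pmf b \<epsilon> N y) \<partial>weight_pmf b \<epsilon> N m)"

lemma weight_pmf_eq_map_binomial:
  "weight_pmf b \<epsilon> N m = map_pmf (\<lambda>k. (b m - \<epsilon> m) / real N * real k + \<epsilon> m)
     (binomial_pmf N ((1 - \<epsilon> m) / (b m - \<epsilon> m)))"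
  by (simp add: weight_pmf_def)

lemma success_prob_bounds:
  fixes \<beta> e :: real
  assumes "1 < \<beta>" "0 < e" "e \<le> 1"
  shows "0 \<le> (1 - e) / (\<beta> - e)" "(1 - e) / (\<beta> - e) \<le> 1" "(1 - e) / (\<beta> - e) \<le> 1 / (\<beta> - 1)"
proof -
  show "0 \<le> (1 - e) / (\<beta> - e)" using assms by simp
  show "(1 - e) / (\<beta> - e) \<le> 1" using assms by (subst divide_le_eq_1_pos) auto
  show "(1 - e) / (\<beta> - e) \<le> 1 / (\<beta> - 1)" using assms by (intro frac_le) auto
qed

context
  fixes b \<epsilon> :: "nat \<Rightarrow> real" and m :: nat
  assumes b_gt_1: "1 < b m" and \<epsilon>_pos: "0 < \<epsilon> m" and \<epsilon>_le_1: "\<epsilon> m \<le> 1"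
begin

lemma finite_set_weight_pmf: "finite (set_pmf (weight_pmf b \<epsilon> N m))"
  using success_prob_bounds[OF b_gt_1 \<epsilon>_pos \<epsilon>_le_1]
  by (simp add: weight_pmf_eq_map_binomial finite_set_pmf_binomial_pmf)

lemma weight_pmf_ge: "v \<in> set_pmf (weight_pmf b \<epsilon> N m) \<Longrightarrow> \<epsilon> m \<le> v"
  unfolding weight_pmf_eq_map_binomial set_map_pmf using b_gt_1 \<epsilon>_le_1 by auto

lemma weight_pmf_pos: "v \<in> set_pmf (weight_pmf b \<epsilon> N m) \<Longrightarrow> 0 < v"
  using weight_pmf_ge \<epsilon>_pos by fastforce

lemma pmf_weight_pmf_at_eps_ge:
  "(1 - (1 - \<epsilon> m) / (b m - \<epsilon> m)) ^ N \<le> pmf (weight_pmf b \<epsilon> N m) (\<epsilon> m)"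
proof -
  let ?B = "binomial_pmf N ((1 - \<epsilon> m) / (b m - \<epsilon> m))"
  have "measure_pmf.prob ?B {0} \<le> measure_pmf.prob ?B ((\<lambda>k. (b m - \<epsilon> m) / real N * real k + \<epsilon> m) -` {\<epsilon> m})"
    by (rule measure_pmf.finite_measure_mono) auto
  then show ?thesis
    using success_prob_bounds[OF b_gt_1 \<epsilon>_pos \<epsilon>_le_1]
    by (simp add: weight_pmf_eq_map_binomial pmf_map measure_pmf_single)
qed

end

lemma pmf_weight_pmf_at_eps_tendsto_1:
  assumes b: "\<And>m. 1 \<le> m \<Longrightarrow> 1 < b m" and \<epsilon>: "\<And>m. 1 \<le> m \<Longrightarrow> 0 < \<epsilon> m \<and> \<epsilon> m \<le> 1"
    and b_lim: "filterlim b at_top sequentially"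
  shows "(\<lambda>m. pmf (weight_pmf b \<epsilon> N m) (\<epsilon> m)) \<longlonglongrightarrow> 1"
proof -
  define s where "s m = (1 - \<epsilon> m) / (b m - \<epsilon> m)" for m
  have large: "\<forall>\<^sub>F m in sequentially. 1 \<le> m" by (rule eventually_ge_at_top)
  have "filterlim (\<lambda>m. - 1 + b m) at_top sequentially"
    by (rule filterlim_tendsto_add_at_top[OF tendsto_const b_lim])
  then have inverse_lim: "(\<lambda>m. inverse (b m - 1)) \<longlonglongrightarrow> 0"
    using tendsto_inverse_0_at_top by fastforce
  have s_bounds: "0 \<le> s m \<and> s m \<le> inverse (b m - 1)" if "1 \<le> m" for m
  proof -
    have "1 < b m" "0 < \<epsilon> m" "\<epsilon> m \<le> 1" using b \<epsilon> that by auto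
    from success_prob_bounds[OF this] show ?thesis by (simp add: s_def divide_inverse)
  qed
  have "\<forall>\<^sub>F m in sequentially. 0 \<le> s m \<and> s m \<le> inverse (b m - 1)"
    using large by (rule eventually_mono) (rule s_bounds)
  then have "\<forall>\<^sub>F m in sequentially. 0 \<le> s m" "\<forall>\<^sub>F m in sequentially. s m \<le> inverse (b m - 1)"
    unfolding eventually_conj_iff by blast+
  from tendsto_sandwich[OF this tendsto_const inverse_lim] have "s \<longlonglongrightarrow> 0" .
  then have "(\<lambda>m. (1 - s m) ^ N) \<longlonglongrightarrow> (1 - 0) ^ N"
    by (intro tendsto_power tendsto_diff tendsto_const)
  then have lower_lim: "(\<lambda>m. (1 - s m) ^ N) \<longlonglongrightarrow> 1" by simp
  have lower: "\<forall>\<^sub>F m in sequentially. (1 - s m) ^ N \<le> pmf (weight_pmf b \<epsilon> N m) (\<epsilon> m)"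
    using large
  proof (rule eventually_mono)
    fix m :: nat assume "1 \<le> m"
    then have "1 < b m" "0 < \<epsilon> m" "\<epsilon> m \<le> 1" using b \<epsilon> by auto
    then show "(1 - s m) ^ N \<le> pmf (weight_pmf b \<epsilon> N m) (\<epsilon> m)"
      unfolding s_def by (rule pmf_weight_pmf_at_eps_ge)
  qed
  have upper: "\<forall>\<^sub>F m in sequentially. pmf (weight_pmf b \<epsilon> N m) (\<epsilon> m) \<le> 1"
    by (simp add: pmf_le_1)
  show ?thesis by (rule tendsto_sandwich[OF lower upper lower_lim tendsto_const])
qed

context
  fixes b \<epsilon> :: "nat \<Rightarrow> real" and c :: real and N m y :: nat
  assumes c_pos: "0 < c"
    and b: "\<And>m. 1 \<le> m \<Longrightarrow> 1 < b m" and \<epsilon>: "\<And>m. 1 \<le> m \<Longrightarrow> 0 < \<epsilon> m \<and> \<epsilon> m \<le> 1"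
    and states: "1 \<le> m" "1 \<le> y"
begin

lemma acceptance_unit_interval:
  assumes "w \<in> insert (\<epsilon> m) (set_pmf (weight_pmf b \<epsilon> N m))" "u \<in> insert (\<epsilon> y) (set_pmf (weight_pmf b \<epsilon> N y))"
  shows "0 \<le> min 1 (c * (u / w)) \<and> min 1 (c * (u / w)) \<le> 1"
proof -
  have "0 < w" "0 < u"
    using assms \<epsilon>[OF states(1)] \<epsilon>[OF states(2)] b[OF states(1)] b[OF states(2)]
      weight_pmf_pos[where b=b and \<epsilon>=\<epsilon> and m=m] weight_pmf_pos[where b=b and \<epsilon>=\<epsilon> and m=y]
    by auto
  then show ?thesis using c_pos by simp
qed

lemma accept_prob_pos: "0 < accept_prob b \<epsilon> N c m y"
  unfolding accept_prob_def
proof (intro integral_measure_pmf_pos)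
  show "finite (set_pmf (weight_pmf b \<epsilon> N m))" "finite (set_pmf (weight_pmf b \<epsilon> N y))"
    using b \<epsilon> states by (simp_all add: finite_set_weight_pmf)
  show "0 < min 1 (c * (u / w))" if "w \<in> set_pmf (weight_pmf b \<epsilon> N m)" "u \<in> set_pmf (weight_pmf b \<epsilon> N y)" for w u
  proof -
    have "0 < w" "0 < u"
      using that \<epsilon>[OF states(1)] \<epsilon>[OF states(2)] b[OF states(1)] b[OF states(2)]
        weight_pmf_pos[where b=b and \<epsilon>=\<epsilon> and m=m] weight_pmf_pos[where b=b and \<epsilon>=\<epsilon> and m=y]
      by auto
    then show ?thesis using c_pos by simp
  qed
qed

lemma accept_prob_le_1: "accept_prob b \<epsilon> N c m y \<le> 1"
  unfolding accept_prob_def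
  by (intro conjunct2[OF integral_measure_pmf_unit_interval] integral_measure_pmf_unit_interval)
     (rule acceptance_unit_interval; simp)+

lemma measure_noisy_move:
  "measure_pmf.prob (noisy_move b \<epsilon> N c m y) A
     = accept_prob b \<epsilon> N c m y * indicator A y + (1 - accept_prob b \<epsilon> N c m y) * indicator A m"
  unfolding noisy_move_def accept_prob_def
  by (rule measure_bind_accept_reject) (rule acceptance_unit_interval; simp)

lemma abs_accept_prob_minus_le:
  "\<bar>accept_prob b \<epsilon> N c m y - min 1 (c * (\<epsilon> y / \<epsilon> m))\<bar>
     \<le> (1 - pmf (weight_pmf b \<epsilon> N m) (\<epsilon> m)) + (1 - pmf (weight_pmf b \<epsilon> N y) (\<epsilon> y))"
  unfolding accept_prob_def
  by (rule abs_double_integral_measure_pmf_minus_le[where h="\<lambda>w u. min 1 (c * (u / w))"])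
     (rule acceptance_unit_interval)

end

lemma accept_prob_tendsto:
  assumes b: "\<And>m. 1 \<le> m \<Longrightarrow> 1 < b m" and \<epsilon>: "\<And>m. 1 \<le> m \<Longrightarrow> 0 < \<epsilon> m \<and> \<epsilon> m \<le> 1"
    and b_lim: "filterlim b at_top sequentially" and "0 < c"
    and g: "filterlim g at_top sequentially"
    and lim: "(\<lambda>m. min 1 (c * (\<epsilon> (g m) / \<epsilon> m))) \<longlonglongrightarrow> L"
  shows "(\<lambda>m. accept_prob b \<epsilon> N c m (g m)) \<longlonglongrightarrow> L"
proof -
  define e where "e m = 1 - pmf (weight_pmf b \<epsilon> N m) (\<epsilon> m)" for m
  have "e \<longlonglongrightarrow> 1 - 1"
    unfolding e_def by (rule tendsto_diff[OF tendsto_const pmf_weight_pmf_at_eps_tendsto_1[OF b \<epsilon> b_lim]])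
  then have e_lim: "e \<longlonglongrightarrow> 0" by simp
  have "(\<lambda>m. e m + e (g m)) \<longlonglongrightarrow> 0 + 0"
    by (rule tendsto_add[OF e_lim filterlim_compose[OF e_lim g]])
  then have error_lim: "(\<lambda>m. e m + e (g m)) \<longlonglongrightarrow> 0" by simp
  have "\<forall>\<^sub>F m in sequentially. 1 \<le> m \<and> 1 \<le> g m"
    using g unfolding filterlim_at_top by (intro eventually_conj eventually_ge_at_top) blast
  then have "\<forall>\<^sub>F m in sequentially.
      norm (accept_prob b \<epsilon> N c m (g m) - min 1 (c * (\<epsilon> (g m) / \<epsilon> m))) \<le> e m + e (g m)"
  proof (rule eventually_mono)
    fix m assume "1 \<le> m \<and> 1 \<le> g m"
    then have "1 \<le> m" "1 \<le> g m" by simp_all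
    from abs_accept_prob_minus_le[OF \<open>0 < c\<close> b \<epsilon> this, where N=N]
    show "norm (accept_prob b \<epsilon> N c m (g m) - min 1 (c * (\<epsilon> (g m) / \<epsilon> m))) \<le> e m + e (g m)"
      by (simp add: e_def)
  qed
  from Lim_null_comparison[OF this error_lim] tendsto_add[OF _ lim]
  show ?thesis by fastforce
qed

lemma ratio_limit_ge_1:
  fixes \<epsilon> :: "nat \<Rightarrow> real"
  assumes pos: "\<And>m. 1 \<le> m \<Longrightarrow> 0 < \<epsilon> m" and "\<epsilon> \<longlonglongrightarrow> 0"
    and ratio: "(\<lambda>m. \<epsilon> (m - 1) / \<epsilon> m) \<longlonglongrightarrow> l"
  shows "1 \<le> l"
proof (rule ccontr)
  assume "\<not> 1 \<le> l"
  then have "\<forall>\<^sub>F m in sequentially. \<epsilon> (m - 1) / \<epsilon> m < 1"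
    using ratio by (intro order_tendstoD(2)) auto
  then obtain M where M: "\<And>m. M \<le> m \<Longrightarrow> \<epsilon> (m - 1) / \<epsilon> m < 1" and "1 \<le> M"
    unfolding eventually_sequentially by (metis le_trans nat_le_linear)
  have increasing: "\<epsilon> M \<le> \<epsilon> m" if "M \<le> m" for m
    using that
  proof (induction m rule: dec_induct)
    case (step k)
    have "\<epsilon> (Suc k - 1) / \<epsilon> (Suc k) < 1" using step.hyps(1) by (intro M) simp
    then have "\<epsilon> k < \<epsilon> (Suc k)" using pos[of "Suc k"] by (simp add: divide_less_eq)
    then show ?case using step.IH by simp
  qed simp
  have "0 < \<epsilon> M" using pos \<open>1 \<le> M\<close> by simp
  with \<open>\<epsilon> \<longlonglongrightarrow> 0\<close> have "\<forall>\<^sub>F m in sequentially. \<epsilon> m < \<epsilon> M"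
    by (rule order_tendstoD(2))
  then obtain m where "M \<le> m" "\<epsilon> m < \<epsilon> M"
    unfolding eventually_sequentially by (metis nat_le_linear)
  with increasing show False by (simp add: not_le[symmetric])
qed

lemma tendsto_min_1_at_top:
  fixes r :: "'a \<Rightarrow> real"
  assumes "filterlim r at_top F" "0 < c"
  shows "((\<lambda>x. min 1 (c * r x)) \<longlongrightarrow> 1) F"
proof (rule tendsto_eventually)
  have "\<forall>\<^sub>F x in F. 1 / c \<le> r x"
    using assms(1) unfolding filterlim_at_top by blast
  then show "\<forall>\<^sub>F x in F. min 1 (c * r x) = 1"
    by (rule eventually_mono) (use assms(2) in \<open>simp add: field_simps\<close>)
qed

lemma acceptance_limits_less:
  fixes \<theta> l :: real
  assumes \<theta>: "0 < \<theta>" "\<theta> < 1" and "1 \<le> l"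
  shows "\<theta> * min 1 ((1 - \<theta>) / (2 * \<theta>) * inverse l) < (1 - \<theta>) * min 1 (2 * \<theta> / (1 - \<theta>) * l)"
proof (cases "1 \<le> 2 * \<theta> / (1 - \<theta>) * l")
  case True
  have "\<theta> * min 1 ((1 - \<theta>) / (2 * \<theta>) * inverse l) \<le> \<theta> * ((1 - \<theta>) / (2 * \<theta>) * inverse l)"
    using \<theta> by (intro mult_left_mono) auto
  also have "\<dots> = (1 - \<theta>) / (2 * l)" using \<theta> \<open>1 \<le> l\<close> by (simp add: field_simps)
  also have "\<dots> < (1 - \<theta>) / 1" using \<theta> \<open>1 \<le> l\<close> by (intro divide_strict_left_mono) auto
  finally show ?thesis using True by simp
next
  case False
  have "\<theta> * min 1 ((1 - \<theta>) / (2 * \<theta>) * inverse l) \<le> \<theta> * 1"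
    using \<theta> by (intro mult_left_mono) auto
  also have "\<dots> < \<theta> * (2 * l)"
    using \<theta> \<open>1 \<le> l\<close> by (intro mult_strict_left_mono) auto
  also have "\<dots> = (1 - \<theta>) * (2 * \<theta> / (1 - \<theta>) * l)" using \<theta> by simp
  finally show ?thesis using False by simp
qed

lemma acceptance_limits:
  fixes \<theta> :: real and \<epsilon> :: "nat \<Rightarrow> real"
  assumes \<theta>: "0 < \<theta>" "\<theta> < 1" and pos: "\<And>m. 1 \<le> m \<Longrightarrow> 0 < \<epsilon> m" and "\<epsilon> \<longlonglongrightarrow> 0"
    and ratio: "(\<exists>l>0. (\<lambda>m. \<epsilon> (m - 1) / \<epsilon> m) \<longlonglongrightarrow> l)
                \<or> filterlim (\<lambda>m. \<epsilon> (m - 1) / \<epsilon> m) at_top sequentially"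
  obtains L\<^sub>u L\<^sub>d where
    "(\<lambda>m. min 1 ((1 - \<theta>) / (2 * \<theta>) * (\<epsilon> (Suc m) / \<epsilon> m))) \<longlonglongrightarrow> L\<^sub>u"
    "(\<lambda>m. min 1 (2 * \<theta> / (1 - \<theta>) * (\<epsilon> (m - 1) / \<epsilon> m))) \<longlonglongrightarrow> L\<^sub>d"
    "\<theta> * L\<^sub>u < (1 - \<theta>) * L\<^sub>d"
  using ratio
proof
  assume "\<exists>l>0. (\<lambda>m. \<epsilon> (m - 1) / \<epsilon> m) \<longlonglongrightarrow> l"
  then obtain l where "0 < l" and ratio_lim: "(\<lambda>m. \<epsilon> (m - 1) / \<epsilon> m) \<longlonglongrightarrow> l" by blast
  have "(\<lambda>m. inverse (\<epsilon> (Suc m - 1) / \<epsilon> (Suc m))) \<longlonglongrightarrow> inverse l"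
    using LIMSEQ_Suc[OF ratio_lim] \<open>0 < l\<close> by (intro tendsto_inverse) simp_all
  then have "(\<lambda>m. min 1 ((1 - \<theta>) / (2 * \<theta>) * (\<epsilon> (Suc m) / \<epsilon> m)))
      \<longlonglongrightarrow> min 1 ((1 - \<theta>) / (2 * \<theta>) * inverse l)"
    by (intro tendsto_intros) simp
  moreover have "(\<lambda>m. min 1 (2 * \<theta> / (1 - \<theta>) * (\<epsilon> (m - 1) / \<epsilon> m)))
      \<longlonglongrightarrow> min 1 (2 * \<theta> / (1 - \<theta>) * l)"
    by (intro tendsto_intros ratio_lim)
  moreover have "1 \<le> l" by (rule ratio_limit_ge_1[OF pos \<open>\<epsilon> \<longlonglongrightarrow> 0\<close> ratio_lim])
  then have "\<theta> * min 1 ((1 - \<theta>) / (2 * \<theta>) * inverse l) < (1 - \<theta>) * min 1 (2 * \<theta> / (1 - \<theta>) * l)"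
    by (rule acceptance_limits_less[OF \<theta>])
  ultimately show ?thesis by (rule that)
next
  assume ratio_inf: "filterlim (\<lambda>m. \<epsilon> (m - 1) / \<epsilon> m) at_top sequentially"
  have "(\<lambda>m. inverse (\<epsilon> (Suc m - 1) / \<epsilon> (Suc m))) \<longlonglongrightarrow> 0"
    by (rule tendsto_inverse_0_at_top[OF filterlim_compose[OF ratio_inf filterlim_Suc]])
  then have "(\<lambda>m. min 1 ((1 - \<theta>) / (2 * \<theta>) * (\<epsilon> (Suc m) / \<epsilon> m)))
      \<longlonglongrightarrow> min 1 ((1 - \<theta>) / (2 * \<theta>) * 0)"
    by (intro tendsto_intros) simp
  then have "(\<lambda>m. min 1 ((1 - \<theta>) / (2 * \<theta>) * (\<epsilon> (Suc m) / \<epsilon> m))) \<longlonglongrightarrow> 0"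
    by simp
  moreover have "(\<lambda>m. min 1 (2 * \<theta> / (1 - \<theta>) * (\<epsilon> (m - 1) / \<epsilon> m))) \<longlonglongrightarrow> 1"
    using ratio_inf \<theta> by (intro tendsto_min_1_at_top) simp_all
  moreover have "\<theta> * 0 < (1 - \<theta>) * 1" using \<theta> by simp
  ultimately show ?thesis by (rule that)
qed

definition up_prob :: "real \<Rightarrow> (nat \<Rightarrow> real) \<Rightarrow> (nat \<Rightarrow> real) \<Rightarrow> nat \<Rightarrow> nat \<Rightarrow> real" where
  "up_prob \<theta> b \<epsilon> N m = \<theta> * accept_prob b \<epsilon> N ((1 - \<theta>) / (2 * \<theta>)) m (Suc m)"

definition down_prob :: "real \<Rightarrow> (nat \<Rightarrow> real) \<Rightarrow> (nat \<Rightarrow> real) \<Rightarrow> nat \<Rightarrow> nat \<Rightarrow> real" where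
  "down_prob \<theta> b \<epsilon> N m = (if m \<le> 1 then 0 else (1 - \<theta>) * accept_prob b \<epsilon> N (2 * \<theta> / (1 - \<theta>)) m (m - 1))"

lemma measure_noisy_mh:
  assumes \<theta>: "0 < \<theta>" "\<theta> < 1"
    and b: "\<And>m. 1 \<le> m \<Longrightarrow> 1 < b m" and \<epsilon>: "\<And>m. 1 \<le> m \<Longrightarrow> 0 < \<epsilon> m \<and> \<epsilon> m \<le> 1"
    and "1 \<le> m"
  shows "measure_pmf.prob (noisy_mh \<theta> b \<epsilon> N m) A
     = up_prob \<theta> b \<epsilon> N m * indicator A (Suc m) + down_prob \<theta> b \<epsilon> N m * indicator A (m - 1)
       + (1 - up_prob \<theta> b \<epsilon> N m - down_prob \<theta> b \<epsilon> N m) * indicator A m"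
proof -
  have c: "0 < (1 - \<theta>) / (2 * \<theta>)" "0 < 2 * \<theta> / (1 - \<theta>)" using \<theta> by simp_all
  have up: "measure_pmf.prob (noisy_move b \<epsilon> N ((1 - \<theta>) / (2 * \<theta>)) m (Suc m)) A
      = accept_prob b \<epsilon> N ((1 - \<theta>) / (2 * \<theta>)) m (Suc m) * indicator A (Suc m)
        + (1 - accept_prob b \<epsilon> N ((1 - \<theta>) / (2 * \<theta>)) m (Suc m)) * indicator A m"
    using \<open>1 \<le> m\<close> by (intro measure_noisy_move[OF c(1) b \<epsilon>]) simp_all
  have "measure_pmf.prob (noisy_mh \<theta> b \<epsilon> N m) A
      = \<theta> * measure_pmf.prob (noisy_move b \<epsilon> N ((1 - \<theta>) / (2 * \<theta>)) m (Suc m)) A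
        + (1 - \<theta>) * measure_pmf.prob (if m = 1 then return_pmf m
                                      else noisy_move b \<epsilon> N (2 * \<theta> / (1 - \<theta>)) m (m - 1)) A"
    unfolding noisy_mh_eq_noisy_moves[OF \<open>1 \<le> m\<close> \<theta>] using \<theta> by (simp add: measure_bind_bernoulli_pmf)
  also have "\<dots> = up_prob \<theta> b \<epsilon> N m * indicator A (Suc m) + down_prob \<theta> b \<epsilon> N m * indicator A (m - 1)
       + (1 - up_prob \<theta> b \<epsilon> N m - down_prob \<theta> b \<epsilon> N m) * indicator A m"
  proof (cases "m = 1")
    case True
    then show ?thesis unfolding up by (simp add: up_prob_def down_prob_def algebra_simps)
  next
    case False
    then have "1 \<le> m - 1" "\<not> m \<le> 1" using \<open>1 \<le> m\<close> by auto
    then have down: "measure_pmf.prob (noisy_move b \<epsilon> N (2 * \<theta> / (1 - \<theta>)) m (m - 1)) A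
      = accept_prob b \<epsilon> N (2 * \<theta> / (1 - \<theta>)) m (m - 1) * indicator A (m - 1)
        + (1 - accept_prob b \<epsilon> N (2 * \<theta> / (1 - \<theta>)) m (m - 1)) * indicator A m"
      by (intro measure_noisy_move[where b=b and \<epsilon>=\<epsilon>, OF c(2) b \<epsilon> \<open>1 \<le> m\<close>])
    show ?thesis
      unfolding up if_not_P[OF False] down using \<open>\<not> m \<le> 1\<close>
      by (simp add: up_prob_def down_prob_def algebra_simps)
  qed
  finally show ?thesis .
qed

lemma noisy_mh_birth_death_chain:
  assumes \<theta>: "0 < \<theta>" "\<theta> < 1"
    and b: "\<And>m. 1 \<le> m \<Longrightarrow> 1 < b m" and \<epsilon>: "\<And>m. 1 \<le> m \<Longrightarrow> 0 < \<epsilon> m \<and> \<epsilon> m \<le> 1"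
    and up_lim: "(\<lambda>m. accept_prob b \<epsilon> N ((1 - \<theta>) / (2 * \<theta>)) m (Suc m)) \<longlonglongrightarrow> L\<^sub>u"
    and down_lim: "(\<lambda>m. accept_prob b \<epsilon> N (2 * \<theta> / (1 - \<theta>)) m (m - 1)) \<longlonglongrightarrow> L\<^sub>d"
    and drift: "\<theta> * L\<^sub>u < (1 - \<theta>) * L\<^sub>d"
  shows "birth_death_chain (noisy_mh \<theta> b \<epsilon> N) (up_prob \<theta> b \<epsilon> N) (down_prob \<theta> b \<epsilon> N)
           (\<theta> * L\<^sub>u) ((1 - \<theta>) * L\<^sub>d)"
proof unfold_locales
  have c: "0 < (1 - \<theta>) / (2 * \<theta>)" "0 < 2 * \<theta> / (1 - \<theta>)" using \<theta> by simp_all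
  note accept_prob_bounds =
    accept_prob_pos[where b=b and \<epsilon>=\<epsilon>, OF _ b \<epsilon>] accept_prob_le_1[where b=b and \<epsilon>=\<epsilon>, OF _ b \<epsilon>]
  show "measure_pmf.prob (noisy_mh \<theta> b \<epsilon> N m) A
      = up_prob \<theta> b \<epsilon> N m * indicator A (Suc m) + down_prob \<theta> b \<epsilon> N m * indicator A (m - 1)
        + (1 - up_prob \<theta> b \<epsilon> N m - down_prob \<theta> b \<epsilon> N m) * indicator A m" if "1 \<le> m" for m A
    by (rule measure_noisy_mh[OF \<theta> b \<epsilon> that])
  show "down_prob \<theta> b \<epsilon> N 1 = 0" by (simp add: down_prob_def)
  show "0 < down_prob \<theta> b \<epsilon> N m" if "2 \<le> m" for m
    using that \<theta> accept_prob_bounds(1)[OF c(2), of m "m - 1" N] by (simp add: down_prob_def)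
  show "0 \<le> up_prob \<theta> b \<epsilon> N m" if "1 \<le> m" for m
    using that \<theta> accept_prob_bounds(1)[OF c(1), of m "Suc m" N] unfolding up_prob_def
    by (intro mult_nonneg_nonneg) simp_all
  show "up_prob \<theta> b \<epsilon> N m + down_prob \<theta> b \<epsilon> N (Suc m) \<le> 1" if "1 \<le> m" for m
  proof -
    have "up_prob \<theta> b \<epsilon> N m \<le> \<theta> * 1"
      using that \<theta> accept_prob_bounds(2)[OF c(1), of m "Suc m" N]
      unfolding up_prob_def by (intro mult_left_mono) simp_all
    moreover have "down_prob \<theta> b \<epsilon> N (Suc m) \<le> (1 - \<theta>) * 1"
      using that \<theta> accept_prob_bounds(2)[OF c(2), of "Suc m" m N]
      unfolding down_prob_def by (simp add: mult_left_le)
    ultimately show ?thesis by simp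
  qed
  show "up_prob \<theta> b \<epsilon> N \<longlonglongrightarrow> \<theta> * L\<^sub>u"
    unfolding up_prob_def by (rule tendsto_mult_left[OF up_lim])
  have "\<forall>\<^sub>F m in sequentially.
      (1 - \<theta>) * accept_prob b \<epsilon> N (2 * \<theta> / (1 - \<theta>)) m (m - 1) = down_prob \<theta> b \<epsilon> N m"
    using eventually_ge_at_top[of 2] by (rule eventually_mono) (simp add: down_prob_def)
  with tendsto_mult_left[OF down_lim, of "1 - \<theta>"] show "down_prob \<theta> b \<epsilon> N \<longlonglongrightarrow> (1 - \<theta>) * L\<^sub>d"
    by (rule Lim_transform_eventually)
  show "\<theta> * L\<^sub>u < (1 - \<theta>) * L\<^sub>d" by (fact drift)
qed

theorem proposition3p13:
  fixes \<theta> :: real and b \<epsilon> :: "nat \<Rightarrow> real" and N :: nat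
  assumes "0 < \<theta>" "\<theta> < 1"
    and "\<And>m. m \<ge> 1 \<Longrightarrow> b m > 1"
    and "\<And>m. m \<ge> 1 \<Longrightarrow> 0 < \<epsilon> m \<and> \<epsilon> m \<le> 1"
    and "filterlim b at_top sequentially"
    and "\<epsilon> \<longlonglongrightarrow> 0"
    and "(\<exists>l>0. (\<lambda>m. \<epsilon> (m - 1) / \<epsilon> m) \<longlonglongrightarrow> l)
         \<or> filterlim (\<lambda>m. \<epsilon> (m - 1) / \<epsilon> m) at_top sequentially"
    and "N \<ge> 1"
  shows "geometrically_ergodic {m. m \<ge> 1} (noisy_mh \<theta> b \<epsilon> N)"
proof -
  note \<theta> = assms(1,2) and b = assms(3) and \<epsilon> = assms(4) and b_lim = assms(5)
  have "\<And>m. 1 \<le> m \<Longrightarrow> 0 < \<epsilon> m" using \<epsilon> by blast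
  then obtain L\<^sub>u L\<^sub>d where
    up: "(\<lambda>m. min 1 ((1 - \<theta>) / (2 * \<theta>) * (\<epsilon> (Suc m) / \<epsilon> m))) \<longlonglongrightarrow> L\<^sub>u" and
    down: "(\<lambda>m. min 1 (2 * \<theta> / (1 - \<theta>) * (\<epsilon> (m - 1) / \<epsilon> m))) \<longlonglongrightarrow> L\<^sub>d" and
    drift: "\<theta> * L\<^sub>u < (1 - \<theta>) * L\<^sub>d"
    using acceptance_limits[OF \<theta> _ assms(6,7)] by blast
  have c: "0 < (1 - \<theta>) / (2 * \<theta>)" "0 < 2 * \<theta> / (1 - \<theta>)" using \<theta> by simp_all
  have "(\<lambda>m. accept_prob b \<epsilon> N ((1 - \<theta>) / (2 * \<theta>)) m (Suc m)) \<longlonglongrightarrow> L\<^sub>u"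
    by (rule accept_prob_tendsto[OF b \<epsilon> b_lim c(1) filterlim_Suc up])
  moreover have "(\<lambda>m. accept_prob b \<epsilon> N (2 * \<theta> / (1 - \<theta>)) m (m - 1)) \<longlonglongrightarrow> L\<^sub>d"
    by (rule accept_prob_tendsto[OF b \<epsilon> b_lim c(2) filterlim_minus_const_nat_at_top down])
  ultimately have "birth_death_chain (noisy_mh \<theta> b \<epsilon> N) (up_prob \<theta> b \<epsilon> N) (down_prob \<theta> b \<epsilon> N)
      (\<theta> * L\<^sub>u) ((1 - \<theta>) * L\<^sub>d)"
    using noisy_mh_birth_death_chain[where b=b and \<epsilon>=\<epsilon>, OF \<theta> b \<epsilon>] drift by blast
  then show ?thesis by (rule birth_death_chain.geometrically_ergodic)
qed

end
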